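(* Let $\delta\in\mathcal D^0$ and let $C$ be an absolutely continuous copula with multidiagonal $\delta$ and density $c$. Then for a.e. $u\in I^d$, for every $2\le i\le d$ and every $s\in I\setminus\Psi_i^\delta$, $c(u)\mathbf 1_{\{u_{(i-1)}<s<u_{(i)}\}}=0$. Equivalently, $c=0$ a.e. on $I^d\setminus L_\delta$.
   Context: $I=[0,1]$; $u_{(1)}\le\dots\le u_{(d)}$ are the ordered coordinates of $u$. A copula is a cdf on $\mathbb R^d$ with uniform-on-$I$ coordinates. For a copula $C$ and $U\sim C$ with order statistics $U_{(i)}$, the multidiagonal is $(\delta_{(i)})$ with $\delta_{(i)}(t)=\mathbb P(U_{(i)}\le t)$. $\mathcal D^0$ is the set of multidiagonals of absolutely continuous copulas. For $2\le i\le d$, $\Psi_i^\delta=\{s\in(0,1):\delta_{(i-1)}(s)>\delta_{(i)}(s)\}$, and $L_\delta=\{u\in I^d:(u_{(i-1)},u_{(i)})\subset\Psi_i^\delta\text{ for all }2\le i\le d\}$. *)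

theory Defs
  imports "HOL-Probability.Probability"
begin

text \<open>Points of \<real>^d are vectors indexed by a finite type 'd, with d = CARD('d).
  Order statistics are 1-based: ord_stat u 1 \<le> ... \<le> ord_stat u d.\<close>

definition ord_stat :: "real^'d \<Rightarrow> nat \<Rightarrow> real" where
  "ord_stat u i = sorted_list_of_multiset (image_mset (\<lambda>j. u $ j) (mset_set UNIV)) ! (i - 1)"

text \<open>A copula, viewed as the law of a random vector U with uniform-on-[0,1] marginals
  (the copula C itself is its cdf, see copula_cdf).\<close>

definition copula_measure :: "(real^'d) measure \<Rightarrow> bool" where
  "copula_measure \<mu> \<longleftrightarrow> prob_space \<mu> \<and> sets \<mu> = sets borel \<and>
     (\<forall>j. distr \<mu> borel (\<lambda>x. x $ j) = uniform_measure lborel {0..1})"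

definition copula_cdf :: "(real^'d) measure \<Rightarrow> real^'d \<Rightarrow> real" where
  "copula_cdf \<mu> u = measure \<mu> {x. \<forall>j. x $ j \<le> u $ j}"

definition multidiag :: "(real^'d) measure \<Rightarrow> nat \<Rightarrow> real \<Rightarrow> real" where
  "multidiag \<mu> i t = measure \<mu> {x. ord_stat x i \<le> t}"

definition Psi :: "(real^'d) measure \<Rightarrow> nat \<Rightarrow> real set" where
  "Psi \<mu> i = {s. 0 < s \<and> s < 1 \<and> multidiag \<mu> (i - 1) s > multidiag \<mu> i s}"

definition unit_cube :: "(real^'d) set" where
  "unit_cube = {u. \<forall>j. 0 \<le> u $ j \<and> u $ j \<le> 1}"

end

theory Submission imports Defs begin

text \<open>Where the multidiagonal does not drop, \<delta>_(i-1)(s) \<le> \<delta>_(i)(s), the event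
  U_(i-1) \<le> s < U_(i), whose probability is exactly \<delta>_(i-1)(s) - \<delta>_(i)(s), is null, so the
  density vanishes a.e. on it. The uncountably many such levels s are handled at once by fixing
  one of them between every pair of rationals: whenever the open gap (u_(i-1), u_(i)) contains
  such a level, it also contains one of these countably many chosen levels. The levels 0 and 1
  need no attention on the unit cube, where all order statistics lie in [0, 1].\<close>

lemma sorted_nth_le_iff_length_filter:
  fixes xs :: "'a::linorder list"
  assumes "sorted xs" "k < length xs"
  shows "xs ! k \<le> s \<longleftrightarrow> k < length (filter (\<lambda>v. v \<le> s) xs)"
proof -
  have len: "length (filter (\<lambda>v. v \<le> s) xs) = card {j. j < length xs \<and> xs ! j \<le> s}"
    by (simp add: length_filter_conv_card)
  show ?thesis
  proof
    assume "xs ! k \<le> s"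
    then have "{0..k} \<subseteq> {j. j < length xs \<and> xs ! j \<le> s}"
      using assms by (auto intro: order_trans[OF sorted_nth_mono])
    then have "card {0..k} \<le> card {j. j < length xs \<and> xs ! j \<le> s}"
      by (intro card_mono) auto
    then show "k < length (filter (\<lambda>v. v \<le> s) xs)"
      using len by simp
  next
    assume k: "k < length (filter (\<lambda>v. v \<le> s) xs)"
    show "xs ! k \<le> s"
    proof (rule ccontr)
      assume "\<not> xs ! k \<le> s"
      then have "{j. j < length xs \<and> xs ! j \<le> s} \<subseteq> {0..<k}"
        using assms by (auto simp: not_less dest: sorted_nth_mono[of xs k])
      then have "card {j. j < length xs \<and> xs ! j \<le> s} \<le> k"
        using card_mono[of "{0..<k}"] by fastforce
      then show False
        using k len by simp
    qed
  qed
qed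

lemma ord_stat_le_iff:
  fixes x :: "real^'d"
  assumes "1 \<le> i" "i \<le> CARD('d)"
  shows "ord_stat x i \<le> s \<longleftrightarrow> i \<le> card {j. x $ j \<le> s}"
proof -
  define M where "M = image_mset (\<lambda>j. x $ j) (mset_set (UNIV :: 'd set))"
  define xs where "xs = sorted_list_of_multiset M"
  have "length xs = CARD('d)"
    unfolding xs_def M_def
    by (metis size_mset mset_sorted_list_of_multiset size_image_mset size_mset_set)
  have "length (filter (\<lambda>v. v \<le> s) xs) = size (filter_mset (\<lambda>v. v \<le> s) M)"
    unfolding xs_def by (metis mset_filter mset_sorted_list_of_multiset size_mset)
  also have "\<dots> = card {j. x $ j \<le> s}"
    unfolding M_def by (simp add: filter_mset_image_mset)
  finally have "length (filter (\<lambda>v. v \<le> s) xs) = card {j. x $ j \<le> s}" .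
  moreover have "ord_stat x i = xs ! (i - 1)"
    unfolding ord_stat_def xs_def M_def by simp
  moreover have "sorted xs"
    unfolding xs_def by simp
  ultimately show ?thesis
    using sorted_nth_le_iff_length_filter[of xs "i - 1" s] assms \<open>length xs = CARD('d)\<close>
    by auto
qed

lemma ord_stat_in_unit_interval:
  assumes "u \<in> unit_cube" "1 \<le> i" "i \<le> CARD('d)"
  shows "0 \<le> ord_stat (u :: real^'d) i" "ord_stat u i \<le> 1"
proof -
  have "{j. u $ j \<le> 1} = UNIV"
    using assms(1) unfolding unit_cube_def by auto
  then show "ord_stat u i \<le> 1"
    using assms by (simp add: ord_stat_le_iff)
  have "i \<le> card {j. u $ j \<le> ord_stat u i}"
    using ord_stat_le_iff[OF assms(2,3)] by blast
  then obtain j where "u $ j \<le> ord_stat u i"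
    using assms(2) by fastforce
  moreover have "0 \<le> u $ j"
    using assms(1) unfolding unit_cube_def by auto
  ultimately show "0 \<le> ord_stat u i"
    by linarith
qed

lemma sets_ord_stat_le:
  assumes "1 \<le> i" "i \<le> CARD('d)"
  shows "{x :: real^'d. ord_stat x i \<le> s} \<in> sets borel"
proof -
  have "{x :: real^'d. ord_stat x i \<le> s} =
      {x. real i \<le> (\<Sum>j\<in>UNIV. if x $ j \<le> s then 1 else 0 :: real)}"
    using assms by (auto simp: ord_stat_le_iff sum.If_cases)
  also have "\<dots> \<in> sets borel"
    by measurable
  finally show ?thesis .
qed

lemma measure_ord_stat_gap:
  fixes \<mu> :: "(real^'d) measure"
  assumes "finite_measure \<mu>" "sets \<mu> = sets borel" "2 \<le> i" "i \<le> CARD('d)"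
  shows "measure \<mu> {x. ord_stat x (i - 1) \<le> s \<and> s < ord_stat x i} =
           multidiag \<mu> (i - 1) s - multidiag \<mu> i s"
proof -
  interpret finite_measure \<mu> by fact
  define A where "A = {x :: real^'d. ord_stat x (i - 1) \<le> s}"
  define B where "B = {x :: real^'d. ord_stat x i \<le> s}"
  have "A \<in> sets \<mu>" "B \<in> sets \<mu>"
    unfolding A_def B_def using assms by (simp_all add: sets_ord_stat_le)
  moreover have "B \<subseteq> A"
    unfolding A_def B_def using assms by (auto simp: ord_stat_le_iff)
  moreover have "{x. ord_stat x (i - 1) \<le> s \<and> s < ord_stat x i} = A - B"
    unfolding A_def B_def by auto
  ultimately show ?thesis
    by (simp add: finite_measure_Diff multidiag_def A_def B_def)
qed

lemma AE_density_zero_on_ord_stat_gap: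
  fixes \<mu> :: "(real^'d) measure" and c :: "real^'d \<Rightarrow> real"
  assumes "prob_space \<mu>" "\<mu> = density lborel (\<lambda>x. ennreal (c x))"
    and "c \<in> borel_measurable borel" "\<And>x. 0 \<le> c x"
    and "2 \<le> i" "i \<le> CARD('d)"
    and "multidiag \<mu> (i - 1) s \<le> multidiag \<mu> i s"
  shows "AE u in lborel. ord_stat u (i - 1) \<le> s \<and> s < ord_stat u i \<longrightarrow> c u = 0"
proof -
  interpret prob_space \<mu> by fact
  define G where "G = {x :: real^'d. ord_stat x (i - 1) \<le> s \<and> s < ord_stat x i}"
  have sets_\<mu>: "sets \<mu> = sets borel"
    using assms(2) by simp
  moreover have "G = {x. ord_stat x (i - 1) \<le> s} - {x. ord_stat x i \<le> s}"
    unfolding G_def by auto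
  ultimately have "G \<in> sets \<mu>"
    using assms(5,6) by (auto intro!: sets.Diff sets_ord_stat_le)
  moreover have "measure \<mu> G = multidiag \<mu> (i - 1) s - multidiag \<mu> i s"
    unfolding G_def using measure_ord_stat_gap[OF finite_measure_axioms sets_\<mu> assms(5,6)] .
  with assms(7) have "measure \<mu> G = 0"
    using measure_nonneg[of \<mu> G] by linarith
  ultimately have "G \<in> null_sets \<mu>"
    by (intro null_setsI) (simp_all add: emeasure_eq_measure)
  then have "G \<in> null_sets (density lborel (\<lambda>x. ennreal (c x)))"
    using assms(2) by simp
  then have "AE u in lborel. u \<in> G \<longrightarrow> ennreal (c u) = 0"
    using assms(3) by (simp add: null_sets_density_iff)
  then show ?thesis
    unfolding G_def by eventually_elim (use assms(4) in auto)
qed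

lemma AE_ex_between:
  fixes a b :: "'a \<Rightarrow> real"
  assumes "\<And>s. s \<in> S \<Longrightarrow> AE u in M. a u < s \<and> s < b u \<longrightarrow> Q u"
  shows "AE u in M. (\<exists>s\<in>S. a u < s \<and> s < b u) \<longrightarrow> Q u"
proof -
  define between where "between pq = {s \<in> S. of_rat (fst pq) < s \<and> s < of_rat (snd pq)}"
    for pq :: "rat \<times> rat"
  define pick where "pick pq = (SOME s. s \<in> between pq)" for pq
  have pick: "pick pq \<in> between pq" if "between pq \<noteq> {}" for pq
    unfolding pick_def using that by (auto intro: someI)
  have "AE u in M. \<forall>pq. between pq \<noteq> {} \<longrightarrow> a u < pick pq \<and> pick pq < b u \<longrightarrow> Q u"
    unfolding AE_all_countable
  proof
    fix pq
    show "AE u in M. between pq \<noteq> {} \<longrightarrow> a u < pick pq \<and> pick pq < b u \<longrightarrow> Q u"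
      using assms[of "pick pq"] pick[of pq] unfolding between_def
      by (cases "between pq = {}") auto
  qed
  then show ?thesis
  proof eventually_elim
    case (elim u)
    show ?case
    proof
      assume "\<exists>s\<in>S. a u < s \<and> s < b u"
      then obtain s where s: "s \<in> S" "a u < s" "s < b u"
        by blast
      obtain p q :: rat where pq: "a u < of_rat p" "of_rat p < s" "s < of_rat q" "of_rat q < b u"
        using of_rat_dense[OF s(2)] of_rat_dense[OF s(3)] by blast
      then have "between (p, q) \<noteq> {}"
        unfolding between_def using s(1) by auto
      moreover from pick[OF this] have "a u < pick (p, q) \<and> pick (p, q) < b u"
        using pq unfolding between_def by auto
      ultimately show "Q u"
        using elim by blast
    qed
  qed
qed

theorem mainTheorem17:
  fixes \<mu> :: "(real^'d) measure" and c :: "real^'d \<Rightarrow> real"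
  assumes "copula_measure \<mu>"
    and "c \<in> borel_measurable borel"
    and "\<And>x. 0 \<le> c x"
    and "\<mu> = density lborel (\<lambda>x. ennreal (c x))"
  shows "AE u in lborel. u \<in> unit_cube \<longrightarrow>
           (\<forall>i\<in>{2..CARD('d)}. \<forall>s\<in>{0..1} - Psi \<mu> i.
              c u * indicator {x. ord_stat x (i - 1) < s \<and> s < ord_stat x i} u = 0)"
proof -
  have "prob_space \<mu>"
    using assms(1) unfolding copula_measure_def by simp
  have "AE u in lborel. \<forall>i\<in>{2..CARD('d)}.
          (\<exists>s\<in>{0<..<1} - Psi \<mu> i. ord_stat u (i - 1) < s \<and> s < ord_stat u i) \<longrightarrow> c u = 0"
  proof (intro AE_ball_countable' AE_ex_between)
    fix i s assume "i \<in> {2..CARD('d)}" "s \<in> {0<..<1} - Psi \<mu> i"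
    then show "AE u in lborel. ord_stat u (i - 1) < s \<and> s < ord_stat u i \<longrightarrow> c u = 0"
      using AE_density_zero_on_ord_stat_gap[OF \<open>prob_space \<mu>\<close> assms(4,2,3), of i s]
      by (auto simp: Psi_def elim: AE_mp)
  qed simp
  then show ?thesis
  proof eventually_elim
    case (elim u)
    show ?case
    proof (intro impI ballI)
      fix i s
      assume u: "u \<in> unit_cube" and i: "i \<in> {2..CARD('d)}" and s: "s \<in> {0..1} - Psi \<mu> i"
      have "0 \<le> ord_stat u (i - 1)" "ord_stat u i \<le> 1"
        using ord_stat_in_unit_interval[of u "i - 1"] ord_stat_in_unit_interval[of u i] u i by auto
      with elim[rule_format, OF i] s
      show "c u * indicator {x. ord_stat x (i - 1) < s \<and> s < ord_stat x i} u = 0"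
        by (fastforce simp: indicator_def)
    qed
  qed
qed

end
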